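(* Let $\mathcal{P}(\mathcal{G})$ be the pdRCON model represented by the graph $\mathcal{G} = (V, E_{\mathcal{G}}, \mathbb{L}_{\mathcal{G}}, \mathbb{E}_{\mathcal{G}})$. Then the set of pdCGs representing the neighbouring submodels of $\mathcal{P}(\mathcal{G})$, that is the set of graphs $\mathcal{H}\in \mathcal{P}$ that are covered by $\mathcal{G}$ in the model inclusion order ($\mathcal{H} \prec_{s} \mathcal{G}$ with no $\mathcal{F}\in\mathcal{P}$ such that $\mathcal{H}\prec_s\mathcal{F}\prec_s\mathcal{G}$), is made up of: (a) all graphs obtained by merging exactly two vertex atomic colour classes of $\mathcal{G}$ into a vertex twin-pairing class, namely (i) $\mathcal{H}=(V, E_{\mathcal{G}},\mathbb{L}_{\mathcal{G}}\setminus \{i\}, \mathbb{E}_{\mathcal{G}})$ for all $i\in \mathbb{L}_{\mathcal{G}}$; (b) all graphs obtained by merging exactly two edge atomic colour classes of $\mathcal{G}$ into an edge twin-pairing class, namely (ii) $\mathcal{H}=(V, E_{\mathcal{G}}, \mathbb{L}_{\mathcal{G}}, \mathbb{E}_{\mathcal{G}}\setminus \{(i,j)\})$ for all $(i, j)\in \mathbb{E}_{\mathcal{G}}$; (c) all graphs obtained by removing exactly one edge atomic colour class from $\mathcal{G}$, namely (iii) $\mathcal{H}=(V, E_{\mathcal{G}}\setminus\{(i,j)\}, \mathbb{L}_{\mathcal{G}}, \mathbb{E}_{\mathcal{G}} \setminus \{(i,j)\})$ for all $(i,j)\in \mathbb{E}_{\mathcal{G}}$; (iv) $\mathcal{H}=(V,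 E_{\mathcal{G}}\setminus\{\tau(i,j)\}, \mathbb{L}_{\mathcal{G}}, \mathbb{E}_{\mathcal{G}} \setminus \{(i,j)\})$ for all $(i,j)\in \mathbb{E}_{\mathcal{G}}$; (v) $\mathcal{H}=(V, E_{\mathcal{G}}\setminus\{(i,j)\}, \mathbb{L}_{\mathcal{G}}, \mathbb{E}_{\mathcal{G}})$ for all $(i,j)\in E_{\mathcal{G}}$ such that $\tau(i,j)\not\in E_{\mathcal{G}}$; (vi) $\mathcal{H}=(V, E_{\mathcal{G}} \setminus \{(i,\tau(i))\}, \mathbb{L}_{\mathcal{G}}, \mathbb{E}_{\mathcal{G}})$ for all $i\in V$ such that $(i,\tau(i)) \in E_{\mathcal{G}}$; (d) all graphs obtained by removing exactly one edge twin-pairing colour class from $\mathcal{G}$, namely (vii) $\mathcal{H}=(V, E_{\mathcal{G}}\setminus\{(i,j), \tau(i,j)\}, \mathbb{L}_{\mathcal{G}}, \mathbb{E}_{\mathcal{G}})$ for all $(i,j), \tau(i,j) \in E_{\mathcal{G}}$ such that $(i,j)\neq \tau(i,j)$ and both $(i,j)\notin \mathbb{E}_{\mathcal{G}}$ and $\tau(i,j)\notin \mathbb{E}_{\mathcal{G}}$.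
   Context: Let $V=\{1,\dots,p\}$ and let $\tau$ be a twin-pairing function on $V$, i.e. $\tau(i)\in V$ with $\tau(\tau(i))=i$ and $\tau(i)\neq i$; it is extended to edges by $\tau(i,j)=(\tau(i),\tau(j))$ (endpoints reordered so the smaller comes first) and to sets elementwise. Fix a partition $(L,R)$ of $V$ with $\tau(L)=R$, numbered so that $L=\{1,\dots,q\}$, $R=\{q+1,\dots,p\}$. Let $F_V=\{(i,j): i,j\in V, i<j\}$, $F_L=\{(i,j)\in F_V: i<\tau(j)\}$, $F_R=\{(i,j)\in F_V: i>\tau(j)\}$. A coloured graph $\mathcal G=(\mathcal V,\mathcal E)$ consists of a partition $\mathcal V$ of $V$ into vertex colour classes and a partition $\mathcal E$ of an edge set $E\subseteq F_V$ into edge colour classes. It is a coloured graph for paired data (pdCG) if every colour class is either atomic (a single element) or twin-pairing (of the form $\{i,\tau(i)\}$ or $\{(i,j),\tau(i,j)\}$ with $(i,j)\neq\tau(i,j)$). The associated RCON model for paired data (pdRCON model) $\mathcal{P}(\mathcal G)$ is the family of Gaussian distributions whose concentration matrix has zero entries for missing edges and equal entries for vertices (diagonal entries) or edges (off-diagonal entries) in the same colour class; $\mathcal{P}$ denotes the family of all pdCGs on $V$. Every pdCG is equivalently represented by the quadruplet $(V,E,\mathbb L,\mathbb E)$ where $E$ is the union of the edge colour classes, $E_L=E\cap F_L$, $E_R=E\cap F_R$, $\mathbb L=\{i\in L:\{i\}\in\mathcal V\}$ (vertices of $L$ in atomic classes) and $\mathbb E=\{(i,j)\in E_L\cap\tau(E_R):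 \{(i,j)\}\in\mathcal E\}$ (edges of $E_L$ whose twin is present and which, with their twin, form atomic classes). The model inclusion order is $\mathcal H\preceq_s\mathcal G$ iff $\mathcal P(\mathcal H)\subseteq\mathcal P(\mathcal G)$, which holds iff the edge set of $\mathcal H$ is contained in that of $\mathcal G$, every vertex colour class of $\mathcal H$ is a union of vertex colour classes of $\mathcal G$, and every edge colour class of $\mathcal H$ is a union of edge colour classes of $\mathcal G$; $\prec_s$ is its strict version. *)

theory Defs
  imports "HOL-Library.Disjoint_Sets"
begin

(* Vertices are natural numbers, V = {1..p}; edges are pairs (i,j) with i < j.
   tau is the twin-pairing function; L = {1..q}, R = {q+1..p}. *)

type_synonym vertex = nat
type_synonym edge = "nat \<times> nat"
(* a coloured graph: (vertex colour classes, edge colour classes) *)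
type_synonym cgraph = "vertex set set \<times> edge set set"

definition pd_setup :: "nat \<Rightarrow> nat \<Rightarrow> (nat \<Rightarrow> nat) \<Rightarrow> bool" where
  "pd_setup p q \<tau> \<longleftrightarrow>
     (\<forall>i\<in>{1..p}. \<tau> i \<in> {1..p} \<and> \<tau> (\<tau> i) = i \<and> \<tau> i \<noteq> i) \<and>
     q \<le> p \<and> \<tau> ` {1..q} = {q+1..p}"

definition tau_e :: "(nat \<Rightarrow> nat) \<Rightarrow> edge \<Rightarrow> edge" where
  "tau_e \<tau> e = (min (\<tau> (fst e)) (\<tau> (snd e)), max (\<tau> (fst e)) (\<tau> (snd e)))"

definition F_V :: "nat \<Rightarrow> edge set" where
  "F_V p = {(i,j). i \<in> {1..p} \<and> j \<in> {1..p} \<and> i < j}"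

definition F_L :: "nat \<Rightarrow> (nat \<Rightarrow> nat) \<Rightarrow> edge set" where
  "F_L p \<tau> = {(i,j) \<in> F_V p. i < \<tau> j}"

definition F_R :: "nat \<Rightarrow> (nat \<Rightarrow> nat) \<Rightarrow> edge set" where
  "F_R p \<tau> = {(i,j) \<in> F_V p. i > \<tau> j}"

definition vclasses :: "cgraph \<Rightarrow> vertex set set" where
  "vclasses G = fst G"

definition eclasses :: "cgraph \<Rightarrow> edge set set" where
  "eclasses G = snd G"

definition pd_edges :: "cgraph \<Rightarrow> edge set" where
  "pd_edges G = \<Union>(eclasses G)"

definition is_pdCG :: "nat \<Rightarrow> (nat \<Rightarrow> nat) \<Rightarrow> cgraph \<Rightarrow> bool" where
  "is_pdCG p \<tau> G \<longleftrightarrow>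
     partition_on {1..p} (vclasses G) \<and>
     pd_edges G \<subseteq> F_V p \<and>
     partition_on (pd_edges G) (eclasses G) \<and>
     (\<forall>C\<in>vclasses G. (\<exists>i. C = {i}) \<or> (\<exists>i. C = {i, \<tau> i})) \<and>
     (\<forall>C\<in>eclasses G. (\<exists>e. C = {e}) \<or> (\<exists>e. C = {e, tau_e \<tau> e} \<and> e \<noteq> tau_e \<tau> e))"

definition pd_LL :: "nat \<Rightarrow> cgraph \<Rightarrow> vertex set" where
  "pd_LL q G = {i \<in> {1..q}. {i} \<in> vclasses G}"

definition pd_EE :: "nat \<Rightarrow> (nat \<Rightarrow> nat) \<Rightarrow> cgraph \<Rightarrow> edge set" where
  "pd_EE p \<tau> G =
     {e \<in> (pd_edges G \<inter> F_L p \<tau>) \<inter> tau_e \<tau> ` (pd_edges G \<inter> F_R p \<tau>). {e} \<in> eclasses G}"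

(* quadruplet representation (V is fixed and omitted): (E, \<bbbL>, \<bbbE>) *)
definition pd_quad :: "nat \<Rightarrow> nat \<Rightarrow> (nat \<Rightarrow> nat) \<Rightarrow> cgraph \<Rightarrow> edge set \<times> vertex set \<times> edge set" where
  "pd_quad p q \<tau> G = (pd_edges G, pd_LL q G, pd_EE p \<tau> G)"

(* model inclusion order H \<preceq>_s G, i.e. P(H) \<subseteq> P(G), via its combinatorial characterisation *)
definition model_le :: "cgraph \<Rightarrow> cgraph \<Rightarrow> bool" where
  "model_le H G \<longleftrightarrow>
     pd_edges H \<subseteq> pd_edges G \<and>
     (\<forall>C\<in>vclasses H. \<exists>S\<subseteq>vclasses G. C = \<Union>S) \<and>
     (\<forall>C\<in>eclasses H. \<exists>S\<subseteq>eclasses G. C = \<Union>S)"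

definition model_less :: "cgraph \<Rightarrow> cgraph \<Rightarrow> bool" where
  "model_less H G \<longleftrightarrow> model_le H G \<and> \<not> model_le G H"

definition covered_by :: "nat \<Rightarrow> (nat \<Rightarrow> nat) \<Rightarrow> cgraph \<Rightarrow> cgraph \<Rightarrow> bool" where
  "covered_by p \<tau> H G \<longleftrightarrow>
     is_pdCG p \<tau> H \<and> model_less H G \<and>
     \<not> (\<exists>F. is_pdCG p \<tau> F \<and> model_less H F \<and> model_less F G)"

end

(* A pdCG is a pair of partitions, of V and of its edge set, into atoms and twin pairs, and
   H lies below G in the model order iff every class of H is a union of classes of G. Then H has
   at most as many classes as G, with equality only if H = G, so the number of classes strictly
   increases along the order. An elementary submodel of G (two twin atoms merged into a
   twin-pairing class, or one edge class deleted) has exactly one class less than G and is therefore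
   covered by G; conversely, above every H strictly below G lies some elementary submodel of G, so
   every covered H is elementary. A partition into atoms and twin pairs is determined by its atoms,
   which the quadruplet records, so a pdCG is determined by its quadruplet; sorting the elementary
   submodels by the kind of class merged or deleted gives the families (i)-(vii). *)

theory Submission
  imports Defs
begin

section \<open>Partitions into atoms and twin pairs\<close>

definition refined_by :: "'a set set \<Rightarrow> 'a set set \<Rightarrow> bool" where
  "refined_by A B \<longleftrightarrow> (\<forall>C\<in>A. \<exists>S\<subseteq>B. C = \<Union>S)"

lemma partition_on_class_eq:
  "partition_on X P \<Longrightarrow> C \<in> P \<Longrightarrow> D \<in> P \<Longrightarrow> x \<in> C \<Longrightarrow> x \<in> D \<Longrightarrow> C = D"
  unfolding partition_on_def disjoint_def by blast

lemma partition_on_singleton_class: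
  "partition_on X P \<Longrightarrow> {x} \<in> P \<Longrightarrow> C \<in> P \<Longrightarrow> x \<in> C \<Longrightarrow> C = {x}"
  using partition_on_class_eq[of X P C "{x}" x] by blast

lemma partition_on_pair_not_singleton:
  "partition_on X P \<Longrightarrow> {x, y} \<in> P \<Longrightarrow> x \<noteq> y \<Longrightarrow> {x} \<notin> P \<and> {y} \<notin> P"
  using partition_on_singleton_class[of X P x "{x, y}"] partition_on_singleton_class[of X P y "{x, y}"]
  by auto

lemma partition_on_ex_class: "partition_on X P \<Longrightarrow> x \<in> X \<Longrightarrow> \<exists>C\<in>P. x \<in> C"
  unfolding partition_on_def by blast

lemma partition_on_class_subset: "partition_on X P \<Longrightarrow> C \<in> P \<Longrightarrow> C \<subseteq> X"
  unfolding partition_on_def by blast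

lemma partition_on_Diff_class:
  assumes "partition_on X P" "C \<in> P"
  shows "partition_on (X - C) (P - {C})"
  using assms unfolding partition_on_def disjoint_def by blast

lemma partition_on_subset_eq:
  assumes A: "partition_on X A" and B: "partition_on X B" and "A \<subseteq> B"
  shows "A = B"
proof (rule antisym)
  show "B \<subseteq> A"
  proof
    fix D assume D: "D \<in> B"
    then obtain x where "x \<in> D" using partition_onD3[OF B] by fastforce
    moreover have "x \<in> X" using partition_on_class_subset[OF B D] \<open>x \<in> D\<close> by blast
    ultimately obtain C where "C \<in> A" "x \<in> C" "C = D"
      using partition_on_ex_class[OF A] partition_on_class_eq[OF B _ D] \<open>A \<subseteq> B\<close> by blast
    then show "D \<in> A" by simp
  qed
qed fact

lemma refined_by_refl: "refined_by A A"
  unfolding refined_by_def by (auto intro: exI[of _ "{_}"])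

lemma refined_by_singleton:
  assumes "refined_by A B" "{} \<notin> B" "{x} \<in> A"
  shows "{x} \<in> B"
proof -
  obtain S where S: "S \<subseteq> B" "{x} = \<Union>S" using assms(1,3) unfolding refined_by_def by blast
  then obtain D where "D \<in> S" "x \<in> D" by blast
  then have "D = {x}" using S assms(2) by blast
  then show ?thesis using S \<open>D \<in> S\<close> by blast
qed

text \<open>Choosing in every class of \<open>A\<close> one of the classes of \<open>B\<close> it is made of gives an injection
  \<open>A \<rightarrow> B\<close>; if it is onto, no class of \<open>A\<close> can contain a second class of \<open>B\<close>.\<close>
lemma card_le_if_refined_by:
  assumes A: "partition_on X A" and B: "partition_on Y B" and fin: "finite B"
    and r: "refined_by A B"
  shows "card A \<le> card B" and "card A = card B \<Longrightarrow> A = B"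
proof -
  have "\<exists>D. D \<in> B \<and> D \<subseteq> C \<and> D \<noteq> {}" if C: "C \<in> A" for C
  proof -
    obtain S where S: "S \<subseteq> B" "C = \<Union>S" using r C unfolding refined_by_def by blast
    obtain x where "x \<in> C" using partition_onD3[OF A] C by fastforce
    then show ?thesis using S by blast
  qed
  then obtain h where h: "\<And>C. C \<in> A \<Longrightarrow> h C \<in> B \<and> h C \<subseteq> C \<and> h C \<noteq> {}" by metis
  have same: "C = C'" if "C \<in> A" "C' \<in> A" "D \<subseteq> C" "D \<subseteq> C'" "D \<noteq> {}" for C C' D
    using that partition_on_class_eq[OF A, of C C'] by blast
  have inj: "inj_on h A"
    by (rule inj_onI) (use h same in metis)
  have hB: "h ` A \<subseteq> B" using h by blast
  show "card A \<le> card B" using card_inj_on_le[OF inj hB fin] .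
  assume "card A = card B"
  then have onto: "h ` A = B" using card_subset_eq[OF fin hB] card_image[OF inj] by simp
  have "C \<in> B" if C: "C \<in> A" for C
  proof -
    obtain S where S: "S \<subseteq> B" "C = \<Union>S" using r C unfolding refined_by_def by blast
    have "D \<subseteq> h C" if "D \<in> S" for D
    proof -
      obtain C' where C': "C' \<in> A" "D = h C'" using onto S \<open>D \<in> S\<close> by blast
      then have "C' = C" using same[OF C'(1) C, of D] h[OF C'(1)] S \<open>D \<in> S\<close> by blast
      then show ?thesis using C' by simp
    qed
    then have "C = h C" using S h[OF C] by blast
    then show ?thesis using h[OF C] by simp
  qed
  then show "A = B" using card_subset_eq[OF fin] \<open>card A = card B\<close> by blast
qed

definition twin_classes :: "('a \<Rightarrow> 'a) \<Rightarrow> 'a set set \<Rightarrow> bool" where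
  "twin_classes \<sigma> P \<longleftrightarrow> (\<forall>C\<in>P. (\<exists>x. C = {x}) \<or> (\<exists>x. x \<noteq> \<sigma> x \<and> C = {x, \<sigma> x}))"

lemma twin_class_cases:
  assumes P: "partition_on X P" "twin_classes \<sigma> P" and inv: "\<And>y. y \<in> X \<Longrightarrow> \<sigma> (\<sigma> y) = y"
    and x: "x \<in> X"
  shows "{x} \<in> P \<or> (x \<noteq> \<sigma> x \<and> {x, \<sigma> x} \<in> P)"
proof -
  obtain C where C: "C \<in> P" "x \<in> C" using partition_on_ex_class[OF P(1) x] by blast
  consider z where "C = {z}" | y where "y \<noteq> \<sigma> y" "C = {y, \<sigma> y}"
    using P(2) C(1) unfolding twin_classes_def by blast
  then show ?thesis
  proof cases
    case 1
    then show ?thesis using C by simp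
  next
    case (2 y)
    then have "y \<in> X" using partition_on_class_subset[OF P(1) C(1)] by blast
    then have "x = y \<or> (x = \<sigma> y \<and> \<sigma> x = y)" using 2 C(2) inv by blast
    then show ?thesis
    proof
      assume "x = y" then show ?thesis using 2 C(1) by simp
    next
      assume "x = \<sigma> y \<and> \<sigma> x = y"
      then have "C = {x, \<sigma> x}" "x \<noteq> \<sigma> x" using 2 by auto
      then show ?thesis using C(1) by simp
    qed
  qed
qed

lemma twin_singleton:
  assumes P: "partition_on X P" "twin_classes \<sigma> P" and inv: "\<And>y. y \<in> X \<Longrightarrow> \<sigma> (\<sigma> y) = y"
    and x: "{x} \<in> P" "\<sigma> x \<in> X"
  shows "{\<sigma> x} \<in> P"
proof -
  have "\<sigma> (\<sigma> x) = x" using partition_on_class_subset[OF P(1) x(1)] inv by simp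
  moreover have "{\<sigma> x, x} \<notin> P" if "\<sigma> x \<noteq> x"
    using partition_on_singleton_class[OF P(1) x(1), of "{\<sigma> x, x}"] that by blast
  ultimately show ?thesis using twin_class_cases[OF P inv x(2)] by auto
qed

lemma twin_partition_eqI:
  assumes P: "partition_on X P" "twin_classes \<sigma> P" and P': "partition_on X P'" "twin_classes \<sigma> P'"
    and inv: "\<And>y. y \<in> X \<Longrightarrow> \<sigma> (\<sigma> y) = y"
    and singletons: "\<And>x. x \<in> X \<Longrightarrow> {x} \<in> P \<longleftrightarrow> {x} \<in> P'"
  shows "P = P'"
proof -
  have sub: "C \<in> Q'" if Q: "partition_on X Q" "twin_classes \<sigma> Q"
    and Q': "partition_on X Q'" "twin_classes \<sigma> Q'"
    and same: "\<And>x. x \<in> X \<Longrightarrow> {x} \<in> Q \<longleftrightarrow> {x} \<in> Q'" and C: "C \<in> Q" for Q Q' C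
  proof -
    have CX: "C \<subseteq> X" using partition_on_class_subset Q(1) C by blast
    consider x where "C = {x}" | x where "x \<noteq> \<sigma> x" "C = {x, \<sigma> x}"
      using Q(2) C unfolding twin_classes_def by blast
    then show ?thesis
    proof cases
      case (1 x)
      then show ?thesis using same[of x] C CX by simp
    next
      case (2 x)
      have "{x} \<notin> Q"
      proof
        assume "{x} \<in> Q"
        then have "C = {x}" using partition_on_singleton_class[OF Q(1) _ C] 2 by blast
        then show False using 2 by auto
      qed
      moreover have "x \<in> X" using CX 2 by blast
      ultimately have "{x, \<sigma> x} \<in> Q'" using twin_class_cases[OF Q' inv, of x] same[of x] by blast
      then show ?thesis using 2 by simp
    qed
  qed
  show ?thesis
  proof (intro set_eqI iffI)
    fix C assume "C \<in> P"
    then show "C \<in> P'" using sub[OF P P' singletons] by blast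
  next
    fix C assume "C \<in> P'"
    moreover have "\<And>x. x \<in> X \<Longrightarrow> {x} \<in> P' \<longleftrightarrow> {x} \<in> P" using singletons by blast
    ultimately show "C \<in> P" using sub[OF P' P] by blast
  qed
qed

definition twin_merge :: "('a \<Rightarrow> 'a) \<Rightarrow> 'a set set \<Rightarrow> 'a \<Rightarrow> 'a set set" where
  "twin_merge \<sigma> P x = insert {x, \<sigma> x} (P - {{x}, {\<sigma> x}})"

context
  fixes X :: "'a set" and P :: "'a set set" and \<sigma> :: "'a \<Rightarrow> 'a" and x :: 'a
  assumes P: "partition_on X P" and atoms: "{x} \<in> P" "{\<sigma> x} \<in> P" and ne: "x \<noteq> \<sigma> x"
begin

lemma partition_on_twin_merge: "partition_on X (twin_merge \<sigma> P x)"
proof -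
  have "{\<sigma> x} \<in> P - {{x}}" using atoms ne by auto
  from partition_on_Diff_class[OF partition_on_Diff_class[OF P atoms(1)] this]
  have rest: "partition_on (X - {x, \<sigma> x}) (P - {{x}, {\<sigma> x}})"
    unfolding Diff_insert2[of X x "{\<sigma> x}"] Diff_insert2[of P "{x}" "{{\<sigma> x}}"] .
  then have "disjnt {x, \<sigma> x} (\<Union>(P - {{x}, {\<sigma> x}}))"
    unfolding partition_on_def disjnt_def by blast
  moreover have "{x, \<sigma> x} \<subseteq> X" using partition_on_class_subset[OF P] atoms by blast
  ultimately show ?thesis
    unfolding twin_merge_def using rest partition_on_insert by blast
qed

lemma twin_classes_twin_merge: "twin_classes \<sigma> P \<Longrightarrow> twin_classes \<sigma> (twin_merge \<sigma> P x)"
  using ne unfolding twin_classes_def twin_merge_def by blast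

lemma refined_by_twin_merge: "refined_by (twin_merge \<sigma> P x) P"
  unfolding refined_by_def twin_merge_def
proof
  fix C assume "C \<in> insert {x, \<sigma> x} (P - {{x}, {\<sigma> x}})"
  then consider "C = {x, \<sigma> x}" | "C \<in> P" by blast
  then show "\<exists>S\<subseteq>P. C = \<Union>S"
  proof cases
    case 1
    then show ?thesis using atoms by (intro exI[of _ "{{x}, {\<sigma> x}}"]) auto
  next
    case 2
    then show ?thesis by (intro exI[of _ "{C}"]) auto
  qed
qed

lemma singleton_in_twin_merge: "{y} \<in> twin_merge \<sigma> P x \<longleftrightarrow> {y} \<in> P \<and> y \<noteq> x \<and> y \<noteq> \<sigma> x"
  using ne unfolding twin_merge_def by auto

lemma card_twin_merge: "finite P \<Longrightarrow> card (twin_merge \<sigma> P x) + 1 = card P"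
proof -
  assume fin: "finite P"
  have "{x, \<sigma> x} \<notin> P" using partition_on_singleton_class[OF P atoms(1), of "{x, \<sigma> x}"] ne by auto
  moreover have "card (P - {{x}, {\<sigma> x}}) + 2 = card P"
    using card_Diff_subset[of "{{x}, {\<sigma> x}}" P] card_mono[OF fin, of "{{x}, {\<sigma> x}}"] atoms ne fin
    by simp
  ultimately show ?thesis using fin unfolding twin_merge_def by simp
qed

lemma refined_by_twin_merge_if_pair:
  assumes A: "partition_on Y A" and r: "refined_by A P" and pair: "{x, \<sigma> x} \<in> A"
  shows "refined_by A (twin_merge \<sigma> P x)"
  unfolding refined_by_def
proof
  fix C assume C: "C \<in> A"
  show "\<exists>S\<subseteq>twin_merge \<sigma> P x. C = \<Union>S"
  proof (cases "C = {x, \<sigma> x}")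
    case True
    then show ?thesis unfolding twin_merge_def by (intro exI[of _ "{C}"]) auto
  next
    case False
    then have disj: "C \<inter> {x, \<sigma> x} = {}" using partition_on_class_eq[OF A C pair] by blast
    obtain S where S: "S \<subseteq> P" "C = \<Union>S" using r C unfolding refined_by_def by blast
    then have "{x} \<notin> S" "{\<sigma> x} \<notin> S" using disj by blast+
    then show ?thesis using S unfolding twin_merge_def by (intro exI[of _ S]) blast
  qed
qed

end

lemma twin_merge_between:
  assumes A: "partition_on X A" "twin_classes \<sigma> A" and B: "partition_on X B" "twin_classes \<sigma> B"
    and inv: "\<And>y. y \<in> X \<Longrightarrow> \<sigma> (\<sigma> y) = y"
    and r: "refined_by A B" and ne: "A \<noteq> B"
  shows "\<exists>x. {x} \<in> B \<and> {\<sigma> x} \<in> B \<and> x \<noteq> \<sigma> x \<and> refined_by A (twin_merge \<sigma> B x)"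
proof -
  obtain C where C: "C \<in> A" "C \<notin> B" using partition_on_subset_eq[OF A(1) B(1)] ne by blast
  then consider x where "C = {x}" | x where "x \<noteq> \<sigma> x" "C = {x, \<sigma> x}"
    using A(2) unfolding twin_classes_def by blast
  then show ?thesis
  proof cases
    case 1
    then show ?thesis using refined_by_singleton[OF r partition_onD3[OF B(1)]] C by simp
  next
    case (2 x)
    have X: "x \<in> X" "\<sigma> x \<in> X" using partition_on_class_subset[OF A(1) C(1)] 2 by auto
    then have "{x} \<in> B" using twin_class_cases[OF B inv, of x] C 2 by blast
    moreover have "{\<sigma> x} \<in> B" using twin_singleton[OF B inv calculation X(2)] .
    moreover have "refined_by A (twin_merge \<sigma> B x)"
      using refined_by_twin_merge_if_pair[where \<sigma>=\<sigma> and x=x, OF B(1) calculation 2(1) A(1) r] C(1) 2(2)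
      by simp
    ultimately show ?thesis using 2 by blast
  qed
qed

section \<open>Elementary submodels\<close>

lemma vclasses_Pair [simp]: "vclasses (Vs, Es) = Vs" and eclasses_Pair [simp]: "eclasses (Vs, Es) = Es"
  by (simp_all add: vclasses_def eclasses_def)

lemma cgraph_eqI: "vclasses H = vclasses G \<Longrightarrow> eclasses H = eclasses G \<Longrightarrow> H = G"
  unfolding vclasses_def eclasses_def by (simp add: prod_eq_iff)

lemma model_le_iff:
  "model_le H G \<longleftrightarrow> pd_edges H \<subseteq> pd_edges G \<and>
     refined_by (vclasses H) (vclasses G) \<and> refined_by (eclasses H) (eclasses G)"
  unfolding model_le_def refined_by_def ..

definition class_count :: "cgraph \<Rightarrow> nat" where
  "class_count G = card (vclasses G) + card (eclasses G)"

definition merge_vertices :: "(nat \<Rightarrow> nat) \<Rightarrow> cgraph \<Rightarrow> vertex \<Rightarrow> cgraph" where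
  "merge_vertices \<tau> G i = (twin_merge \<tau> (vclasses G) i, eclasses G)"

definition merge_edges :: "(nat \<Rightarrow> nat) \<Rightarrow> cgraph \<Rightarrow> edge \<Rightarrow> cgraph" where
  "merge_edges \<tau> G e = (vclasses G, twin_merge (tau_e \<tau>) (eclasses G) e)"

definition remove_class :: "cgraph \<Rightarrow> edge set \<Rightarrow> cgraph" where
  "remove_class G C = (vclasses G, eclasses G - {C})"

definition elementary_submodel :: "(nat \<Rightarrow> nat) \<Rightarrow> cgraph \<Rightarrow> cgraph \<Rightarrow> bool" where
  "elementary_submodel \<tau> H G \<longleftrightarrow>
     (\<exists>i. {i} \<in> vclasses G \<and> {\<tau> i} \<in> vclasses G \<and> H = merge_vertices \<tau> G i)
   \<or> (\<exists>e. {e} \<in> eclasses G \<and> {tau_e \<tau> e} \<in> eclasses G \<and> e \<noteq> tau_e \<tau> e \<and> H = merge_edges \<tau> G e)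
   \<or> (\<exists>C\<in>eclasses G. H = remove_class G C)"

lemma elementary_submodels_eq:
  "{H. elementary_submodel \<tau> H G} =
      {merge_vertices \<tau> G i | i. {i} \<in> vclasses G \<and> {\<tau> i} \<in> vclasses G}
    \<union> {merge_edges \<tau> G e | e. {e} \<in> eclasses G \<and> {tau_e \<tau> e} \<in> eclasses G \<and> e \<noteq> tau_e \<tau> e}
    \<union> remove_class G ` eclasses G"
  unfolding elementary_submodel_def by blast

section \<open>The twin pairing on vertices and edges\<close>

lemma F_L_subset_F_V: "F_L p \<tau> \<subseteq> F_V p" and F_R_subset_F_V: "F_R p \<tau> \<subseteq> F_V p"
  unfolding F_L_def F_R_def by auto

lemma F_L_F_R_disjoint: "e \<in> F_L p \<tau> \<Longrightarrow> e \<notin> F_R p \<tau>"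
  unfolding F_L_def F_R_def by auto

lemma finite_F_V: "finite (F_V p)"
  by (rule finite_subset[of _ "{1..p} \<times> {1..p}"]) (auto simp: F_V_def)

locale paired_data =
  fixes p q :: nat and \<tau> :: "nat \<Rightarrow> nat"
  assumes pairing: "pd_setup p q \<tau>"
begin

lemma tau_in_V: "i \<in> {1..p} \<Longrightarrow> \<tau> i \<in> {1..p}"
  and tau_tau: "i \<in> {1..p} \<Longrightarrow> \<tau> (\<tau> i) = i"
  and tau_neq: "i \<in> {1..p} \<Longrightarrow> \<tau> i \<noteq> i"
  using pairing unfolding pd_setup_def by blast+

lemma tau_L_R: "i \<in> {1..q} \<longleftrightarrow> i \<in> {1..p} \<and> \<tau> i \<in> {q+1..p}"
proof -
  have "q \<le> p" and LR: "\<tau> ` {1..q} = {q+1..p}" using pairing unfolding pd_setup_def by blast+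
  have "\<tau> i \<in> {q+1..p}" if "i \<in> {1..q}" using LR that by blast
  moreover have "i \<in> {1..q}" if i: "i \<in> {1..p}" "\<tau> i \<in> {q+1..p}"
  proof -
    obtain j where "j \<in> {1..q}" "\<tau> i = \<tau> j" using LR i(2) by (metis imageE)
    moreover have "j \<in> {1..p}" using \<open>j \<in> {1..q}\<close> \<open>q \<le> p\<close> by simp
    ultimately have "i = j" using tau_tau[OF i(1)] tau_tau by metis
    then show ?thesis using \<open>j \<in> {1..q}\<close> by simp
  qed
  moreover have "i \<in> {1..p}" if "i \<in> {1..q}" using that \<open>q \<le> p\<close> by simp
  ultimately show ?thesis by blast
qed

lemma tau_L: "1 \<le> i \<Longrightarrow> i \<le> q \<Longrightarrow> q < \<tau> i \<and> \<tau> i \<le> p"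
  using tau_L_R[of i] by auto

lemma tau_R: "q < i \<Longrightarrow> i \<le> p \<Longrightarrow> 1 \<le> \<tau> i \<and> \<tau> i \<le> q"
  using tau_L_R[of i] tau_in_V[of i] by auto

lemma tau_e_F_V_cases:
  assumes "e \<in> F_V p"
  obtains a b where "e = (a, b)" "1 \<le> a" "a < b" "b \<le> p" "\<tau> (\<tau> a) = a" "\<tau> (\<tau> b) = b"
    "\<tau> a \<in> {1..p}" "\<tau> b \<in> {1..p}" "\<tau> a \<noteq> \<tau> b"
    "tau_e \<tau> e = (min (\<tau> a) (\<tau> b), max (\<tau> a) (\<tau> b))" "\<tau> a \<noteq> a"
proof -
  obtain a b where e: "e = (a, b)" "1 \<le> a" "a < b" "b \<le> p" using assms unfolding F_V_def by auto
  then have "\<tau> (\<tau> a) = a" "\<tau> (\<tau> b) = b" "\<tau> a \<in> {1..p}" "\<tau> b \<in> {1..p}"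
    using tau_tau tau_in_V by auto
  moreover have "\<tau> a \<noteq> \<tau> b" using calculation e(3) by (metis less_irrefl)
  moreover have "\<tau> a \<noteq> a" using tau_neq e by simp
  ultimately show ?thesis using that e unfolding tau_e_def by simp
qed

lemma tau_e_tau_e: "e \<in> F_V p \<Longrightarrow> tau_e \<tau> (tau_e \<tau> e) = e"
  by (erule tau_e_F_V_cases) (auto simp: tau_e_def min_def max_def)

text \<open>Membership in \<open>F_L\<close> or \<open>F_R\<close> is decided by which of \<open>L\<close>, \<open>R\<close> contain the
  endpoints, and \<open>\<tau>\<close> swaps \<open>L\<close> and \<open>R\<close>.\<close>
lemma tau_e_F_L: "e \<in> F_L p \<tau> \<Longrightarrow> tau_e \<tau> e \<in> F_R p \<tau>"
  and tau_e_F_R: "e \<in> F_R p \<tau> \<Longrightarrow> tau_e \<tau> e \<in> F_L p \<tau>"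
proof -
  have side: "a \<le> q \<Longrightarrow> q < \<tau> a \<and> \<tau> a \<le> p" "q < a \<Longrightarrow> 1 \<le> \<tau> a \<and> \<tau> a \<le> q"
    if "1 \<le> a" "a \<le> p" for a
    using tau_L tau_R that by auto
  show "tau_e \<tau> e \<in> F_R p \<tau>" if "e \<in> F_L p \<tau>"
  proof (rule tau_e_F_V_cases[OF F_L_subset_F_V[THEN subsetD, OF that]])
    fix a b assume e: "e = (a, b)" "1 \<le> a" "a < b" "b \<le> p" "\<tau> (\<tau> a) = a" "\<tau> (\<tau> b) = b"
      "\<tau> a \<noteq> \<tau> b" "tau_e \<tau> e = (min (\<tau> a) (\<tau> b), max (\<tau> a) (\<tau> b))" "\<tau> a \<noteq> a"
    have "a < \<tau> b" using that e(1) by (simp add: F_L_def)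
    then show ?thesis using e side[of a] side[of b] unfolding F_R_def F_V_def
      by (cases "\<tau> a < \<tau> b"; cases "a \<le> q"; cases "b \<le> q") (auto simp: min_def max_def)
  qed
  show "tau_e \<tau> e \<in> F_L p \<tau>" if "e \<in> F_R p \<tau>"
  proof (rule tau_e_F_V_cases[OF F_R_subset_F_V[THEN subsetD, OF that]])
    fix a b assume e: "e = (a, b)" "1 \<le> a" "a < b" "b \<le> p" "\<tau> (\<tau> a) = a" "\<tau> (\<tau> b) = b"
      "\<tau> a \<noteq> \<tau> b" "tau_e \<tau> e = (min (\<tau> a) (\<tau> b), max (\<tau> a) (\<tau> b))" "\<tau> a \<noteq> a"
    have "\<tau> b < a" using that e(1) by (simp add: F_R_def)
    then show ?thesis using e side[of a] side[of b] unfolding F_L_def F_V_def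
      by (cases "\<tau> a < \<tau> b"; cases "a \<le> q"; cases "b \<le> q") (auto simp: min_def max_def)
  qed
qed

lemma F_V_cases:
  assumes "e \<in> F_V p"
  shows "e \<in> F_L p \<tau> \<or> e \<in> F_R p \<tau> \<or> tau_e \<tau> e = e"
proof (rule tau_e_F_V_cases[OF assms])
  fix a b assume e: "e = (a, b)" "1 \<le> a" "a < b" "b \<le> p" "\<tau> (\<tau> b) = b"
    "tau_e \<tau> e = (min (\<tau> a) (\<tau> b), max (\<tau> a) (\<tau> b))"
  consider "a < \<tau> b" | "\<tau> b < a" | "a = \<tau> b" by linarith
  then show ?thesis
  proof cases
    case 3
    then have "\<tau> a = b" using e by simp
    then show ?thesis using e 3 by (auto simp: min_def max_def)
  qed (use e in \<open>auto simp: F_L_def F_R_def F_V_def\<close>)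
qed

lemma tau_e_fixed_iff: "e \<in> F_V p \<Longrightarrow> tau_e \<tau> e = e \<longleftrightarrow> e = (fst e, \<tau> (fst e))"
  by (erule tau_e_F_V_cases) (auto simp: min_def max_def)

lemma tau_e_fixed_not_F_L: "tau_e \<tau> e = e \<Longrightarrow> e \<notin> F_L p \<tau>"
  using tau_e_F_L F_L_F_R_disjoint by metis

lemma is_pdCG_iff:
  "is_pdCG p \<tau> G \<longleftrightarrow> partition_on {1..p} (vclasses G) \<and> twin_classes \<tau> (vclasses G) \<and>
     pd_edges G \<subseteq> F_V p \<and> partition_on (pd_edges G) (eclasses G) \<and> twin_classes (tau_e \<tau>) (eclasses G)"
proof -
  have "twin_classes \<tau> P \<longleftrightarrow> (\<forall>C\<in>P. (\<exists>i. C = {i}) \<or> (\<exists>i. C = {i, \<tau> i}))"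
    if P: "partition_on {1..p} P" for P
  proof -
    have "\<tau> i \<noteq> i" if "{i, \<tau> i} \<in> P" for i
      using tau_neq partition_on_class_subset[OF P that] by simp
    then show ?thesis unfolding twin_classes_def by metis
  qed
  moreover have "twin_classes (tau_e \<tau>) P \<longleftrightarrow>
      (\<forall>C\<in>P. (\<exists>e. C = {e}) \<or> (\<exists>e. C = {e, tau_e \<tau> e} \<and> e \<noteq> tau_e \<tau> e))" for P
    unfolding twin_classes_def by blast
  ultimately show ?thesis unfolding is_pdCG_def by (cases "partition_on {1..p} (vclasses G)") (simp_all add: conj_ac)
qed

lemma pdCG_vclasses: "is_pdCG p \<tau> G \<Longrightarrow> partition_on {1..p} (vclasses G)"
  and pdCG_vtwins: "is_pdCG p \<tau> G \<Longrightarrow> twin_classes \<tau> (vclasses G)"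
  and pdCG_edges: "is_pdCG p \<tau> G \<Longrightarrow> pd_edges G \<subseteq> F_V p"
  and pdCG_eclasses: "is_pdCG p \<tau> G \<Longrightarrow> partition_on (pd_edges G) (eclasses G)"
  and pdCG_etwins: "is_pdCG p \<tau> G \<Longrightarrow> twin_classes (tau_e \<tau>) (eclasses G)"
  by (simp_all add: is_pdCG_iff)

lemma pdCG_finite_classes:
  assumes "is_pdCG p \<tau> G"
  shows "finite (vclasses G)" "finite (eclasses G)"
  using finite_elements[OF _ pdCG_vclasses[OF assms]]
    finite_elements[OF finite_subset[OF pdCG_edges[OF assms] finite_F_V] pdCG_eclasses[OF assms]]
  by simp_all

lemma pdCG_tau_e_tau_e: "is_pdCG p \<tau> G \<Longrightarrow> e \<in> pd_edges G \<Longrightarrow> tau_e \<tau> (tau_e \<tau> e) = e"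
  using pdCG_edges tau_e_tau_e by blast

lemma vertex_singleton_tau:
  assumes G: "is_pdCG p \<tau> G" and i: "{i} \<in> vclasses G"
  shows "{\<tau> i} \<in> vclasses G"
proof -
  have "i \<in> {1..p}" using partition_on_class_subset[OF pdCG_vclasses[OF G] i] by simp
  then show ?thesis using twin_singleton[OF pdCG_vclasses[OF G] pdCG_vtwins[OF G] tau_tau i] tau_in_V by blast
qed

lemma vertex_atom_tau_neq: "is_pdCG p \<tau> G \<Longrightarrow> {i} \<in> vclasses G \<Longrightarrow> i \<noteq> \<tau> i"
  using partition_on_class_subset[OF pdCG_vclasses] tau_neq by (metis insert_subset)

lemma edge_class_cases:
  assumes G: "is_pdCG p \<tau> G" and e: "e \<in> pd_edges G"
  shows "{e} \<in> eclasses G \<or> (e \<noteq> tau_e \<tau> e \<and> {e, tau_e \<tau> e} \<in> eclasses G)"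
  using twin_class_cases[OF pdCG_eclasses[OF G] pdCG_etwins[OF G] pdCG_tau_e_tau_e[OF G] e] .

lemma edge_singleton_tau:
  assumes G: "is_pdCG p \<tau> G" and "{e} \<in> eclasses G" "tau_e \<tau> e \<in> pd_edges G"
  shows "{tau_e \<tau> e} \<in> eclasses G"
  using twin_singleton[OF pdCG_eclasses[OF G] pdCG_etwins[OF G]] pdCG_tau_e_tau_e[OF G] assms(2,3)
  by blast

subsection \<open>The covering relation\<close>

lemma class_count_mono:
  assumes H: "is_pdCG p \<tau> H" and G: "is_pdCG p \<tau> G" and le: "model_le H G"
  shows "class_count H \<le> class_count G" and "class_count H = class_count G \<Longrightarrow> H = G"
proof -
  note v = card_le_if_refined_by[OF pdCG_vclasses[OF H] pdCG_vclasses[OF G] pdCG_finite_classes(1)[OF G]]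
  note e = card_le_if_refined_by[OF pdCG_eclasses[OF H] pdCG_eclasses[OF G] pdCG_finite_classes(2)[OF G]]
  have r: "refined_by (vclasses H) (vclasses G)" "refined_by (eclasses H) (eclasses G)"
    using le unfolding model_le_iff by blast+
  show "class_count H \<le> class_count G" using v(1)[OF r(1)] e(1)[OF r(2)] unfolding class_count_def by simp
  assume "class_count H = class_count G"
  then have "card (vclasses H) = card (vclasses G)" "card (eclasses H) = card (eclasses G)"
    using v(1)[OF r(1)] e(1)[OF r(2)] unfolding class_count_def by linarith+
  then show "H = G" using v(2)[OF r(1)] e(2)[OF r(2)] by (simp add: cgraph_eqI)
qed

lemma model_less_iff:
  assumes "is_pdCG p \<tau> H" "is_pdCG p \<tau> G"
  shows "model_less H G \<longleftrightarrow> model_le H G \<and> H \<noteq> G"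
  using class_count_mono[OF assms] class_count_mono[OF assms(2,1)] refined_by_refl
  unfolding model_less_def model_le_iff by fastforce

lemma pd_edges_merge_vertices [simp]: "pd_edges (merge_vertices \<tau> G i) = pd_edges G"
  by (simp add: merge_vertices_def pd_edges_def)

lemma pd_edges_merge_edges:
  assumes "is_pdCG p \<tau> G" "{e} \<in> eclasses G" "{tau_e \<tau> e} \<in> eclasses G" "e \<noteq> tau_e \<tau> e"
  shows "pd_edges (merge_edges \<tau> G e) = pd_edges G"
  using partition_onD1[OF partition_on_twin_merge[where \<sigma>="tau_e \<tau>" and x=e,
        OF pdCG_eclasses[OF assms(1)] assms(2-4)]]
  by (simp add: merge_edges_def pd_edges_def)

lemma pd_edges_remove_class:
  "is_pdCG p \<tau> G \<Longrightarrow> C \<in> eclasses G \<Longrightarrow> pd_edges (remove_class G C) = pd_edges G - C"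
  using partition_onD1[OF partition_on_Diff_class[OF pdCG_eclasses]]
  by (simp add: remove_class_def pd_edges_def)

lemma merge_vertices_submodel:
  assumes G: "is_pdCG p \<tau> G" and atoms: "{i} \<in> vclasses G" "{\<tau> i} \<in> vclasses G"
  shows "is_pdCG p \<tau> (merge_vertices \<tau> G i)" "model_le (merge_vertices \<tau> G i) G"
    "class_count (merge_vertices \<tau> G i) + 1 = class_count G"
proof -
  note ne = vertex_atom_tau_neq[OF G atoms(1)]
  note merge = partition_on_twin_merge card_twin_merge refined_by_twin_merge twin_classes_twin_merge
  note merge = merge[where \<sigma>=\<tau> and x=i, OF pdCG_vclasses[OF G] atoms ne]
  show "is_pdCG p \<tau> (merge_vertices \<tau> G i)"
    using G merge(1) merge(4)[OF pdCG_vtwins[OF G]] unfolding is_pdCG_iff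
    by (simp add: merge_vertices_def pd_edges_def)
  show "model_le (merge_vertices \<tau> G i) G"
    using merge(3) unfolding model_le_iff by (simp add: merge_vertices_def pd_edges_def refined_by_refl)
  show "class_count (merge_vertices \<tau> G i) + 1 = class_count G"
    using merge(2)[OF pdCG_finite_classes(1)[OF G]] by (simp add: merge_vertices_def class_count_def)
qed

lemma merge_edges_submodel:
  assumes G: "is_pdCG p \<tau> G" and atoms: "{e} \<in> eclasses G" "{tau_e \<tau> e} \<in> eclasses G"
    and ne: "e \<noteq> tau_e \<tau> e"
  shows "is_pdCG p \<tau> (merge_edges \<tau> G e)" "model_le (merge_edges \<tau> G e) G"
    "class_count (merge_edges \<tau> G e) + 1 = class_count G"
proof -
  note merge = partition_on_twin_merge card_twin_merge refined_by_twin_merge twin_classes_twin_merge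
  note merge = merge[where \<sigma>="tau_e \<tau>" and x=e, OF pdCG_eclasses[OF G] atoms ne]
  note edges = pd_edges_merge_edges[OF G atoms ne]
  show "is_pdCG p \<tau> (merge_edges \<tau> G e)"
    using G merge(1) merge(4)[OF pdCG_etwins[OF G]] edges unfolding is_pdCG_iff
    by (simp add: merge_edges_def pd_edges_def)
  show "model_le (merge_edges \<tau> G e) G"
    using merge(3) edges unfolding model_le_iff by (simp add: merge_edges_def refined_by_refl)
  show "class_count (merge_edges \<tau> G e) + 1 = class_count G"
    using merge(2)[OF pdCG_finite_classes(2)[OF G]] by (simp add: merge_edges_def class_count_def)
qed

lemma remove_class_submodel:
  assumes G: "is_pdCG p \<tau> G" and C: "C \<in> eclasses G"
  shows "is_pdCG p \<tau> (remove_class G C)" "model_le (remove_class G C) G"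
    "class_count (remove_class G C) + 1 = class_count G"
proof -
  note edges = pd_edges_remove_class[OF G C]
  show "is_pdCG p \<tau> (remove_class G C)"
    using G partition_on_Diff_class[OF pdCG_eclasses[OF G] C] edges
    unfolding is_pdCG_iff twin_classes_def by (auto simp: remove_class_def)
  show "model_le (remove_class G C) G"
    using edges refined_by_refl unfolding model_le_iff refined_by_def
    by (auto simp: remove_class_def intro: exI[of _ "{_}"])
  show "class_count (remove_class G C) + 1 = class_count G"
    using C pdCG_finite_classes(2)[OF G] card_Suc_Diff1[OF _ C]
    by (simp add: remove_class_def class_count_def)
qed

lemma elementary_submodel_props:
  assumes G: "is_pdCG p \<tau> G" and "elementary_submodel \<tau> H G"
  shows "is_pdCG p \<tau> H \<and> model_le H G \<and> class_count H + 1 = class_count G"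
  using assms(2) merge_vertices_submodel[OF G] merge_edges_submodel[OF G] remove_class_submodel[OF G]
  unfolding elementary_submodel_def by blast

lemma class_count_less:
  assumes "is_pdCG p \<tau> H" "is_pdCG p \<tau> G" "model_less H G"
  shows "class_count H < class_count G"
  using class_count_mono[OF assms(1,2)] assms(3) unfolding model_less_iff[OF assms(1,2)]
  by fastforce

lemma remove_class_above:
  assumes G: "is_pdCG p \<tau> G" and le: "model_le H G" and E: "pd_edges H \<noteq> pd_edges G"
  shows "\<exists>C\<in>eclasses G. model_le H (remove_class G C)"
proof -
  have r: "pd_edges H \<subseteq> pd_edges G" "refined_by (eclasses H) (eclasses G)"
    using le unfolding model_le_iff by blast+
  obtain x where x: "x \<in> pd_edges G" "x \<notin> pd_edges H" using r(1) E by blast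
  then obtain D where D: "D \<in> eclasses G" "x \<in> D" unfolding pd_edges_def by blast
  have notin: "D \<notin> S" if "\<Union>S \<subseteq> pd_edges H" for S
    using that x(2) D(2) by blast
  have "pd_edges H \<inter> D = {}"
  proof (rule ccontr)
    assume "pd_edges H \<inter> D \<noteq> {}"
    then obtain y C where y: "y \<in> C" "C \<in> eclasses H" "y \<in> D" unfolding pd_edges_def by blast
    then obtain S where S: "S \<subseteq> eclasses G" "C = \<Union>S" using r(2) unfolding refined_by_def by blast
    then obtain D' where "D' \<in> S" "y \<in> D'" using y(1) by blast
    then have "D \<in> S" using partition_on_class_eq[OF pdCG_eclasses[OF G] D(1)] S(1) y(3) by blast
    moreover have "\<Union>S \<subseteq> pd_edges H" using S(2) y(2) unfolding pd_edges_def by blast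
    ultimately show False using notin by blast
  qed
  moreover have "refined_by (eclasses H) (eclasses G - {D})"
    unfolding refined_by_def
  proof
    fix C assume C: "C \<in> eclasses H"
    then obtain S where S: "S \<subseteq> eclasses G" "C = \<Union>S" using r(2) unfolding refined_by_def by blast
    moreover have "\<Union>S \<subseteq> pd_edges H" using S(2) C unfolding pd_edges_def by blast
    ultimately show "\<exists>S\<subseteq>eclasses G - {D}. C = \<Union>S" using notin by blast
  qed
  ultimately have "model_le H (remove_class G D)"
    using le pd_edges_remove_class[OF G D(1)] unfolding model_le_iff by (auto simp: remove_class_def)
  then show ?thesis using D(1) by blast
qed

lemma elementary_submodel_between:
  assumes H: "is_pdCG p \<tau> H" and G: "is_pdCG p \<tau> G" and le: "model_le H G" and ne: "H \<noteq> G"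
  shows "\<exists>F. elementary_submodel \<tau> F G \<and> model_le H F"
proof -
  have r: "pd_edges H \<subseteq> pd_edges G" "refined_by (vclasses H) (vclasses G)"
    "refined_by (eclasses H) (eclasses G)"
    using le unfolding model_le_iff by blast+
  consider (vertices) "vclasses H \<noteq> vclasses G"
    | (edges) "pd_edges H \<noteq> pd_edges G"
    | (edge_classes) "pd_edges H = pd_edges G" "eclasses H \<noteq> eclasses G"
    using ne cgraph_eqI by blast
  then show ?thesis
  proof cases
    case vertices
    then obtain i where i: "{i} \<in> vclasses G" "{\<tau> i} \<in> vclasses G"
      "refined_by (vclasses H) (twin_merge \<tau> (vclasses G) i)"
      using twin_merge_between[OF pdCG_vclasses[OF H] pdCG_vtwins[OF H] pdCG_vclasses[OF G]
          pdCG_vtwins[OF G] tau_tau r(2)] by blast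
    then have "model_le H (merge_vertices \<tau> G i)"
      using r unfolding model_le_iff pd_edges_merge_vertices by (simp add: merge_vertices_def)
    then show ?thesis using i unfolding elementary_submodel_def by blast
  next
    case edges
    then show ?thesis using remove_class_above[OF G le] unfolding elementary_submodel_def by blast
  next
    case edge_classes
    obtain e where e: "{e} \<in> eclasses G" "{tau_e \<tau> e} \<in> eclasses G" "e \<noteq> tau_e \<tau> e"
      "refined_by (eclasses H) (twin_merge (tau_e \<tau>) (eclasses G) e)"
      using twin_merge_between[OF pdCG_eclasses[OF H, unfolded edge_classes(1)] pdCG_etwins[OF H]
          pdCG_eclasses[OF G] pdCG_etwins[OF G] pdCG_tau_e_tau_e[OF G] r(3) edge_classes(2)]
      by blast
    then have "model_le H (merge_edges \<tau> G e)"
      using r unfolding model_le_iff pd_edges_merge_edges[OF G e(1-3)] by (simp add: merge_edges_def)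
    then show ?thesis using e unfolding elementary_submodel_def by blast
  qed
qed

lemma covered_by_iff_elementary_submodel:
  assumes G: "is_pdCG p \<tau> G"
  shows "covered_by p \<tau> H G \<longleftrightarrow> elementary_submodel \<tau> H G"
proof
  assume "covered_by p \<tau> H G"
  then have H: "is_pdCG p \<tau> H" and less: "model_less H G"
    and between: "\<nexists>F. is_pdCG p \<tau> F \<and> model_less H F \<and> model_less F G"
    unfolding covered_by_def by blast+
  obtain F where F: "elementary_submodel \<tau> F G" "model_le H F"
    using elementary_submodel_between[OF H G] less unfolding model_less_iff[OF H G] by blast
  note F_props = elementary_submodel_props[OF G F(1)]
  have "model_less F G" using F_props model_less_iff[of F G] G by fastforce
  then have "H = F" using between F_props F(2) model_less_iff[OF H] by blast
  then show "elementary_submodel \<tau> H G" using F(1) by simp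
next
  assume "elementary_submodel \<tau> H G"
  note H_props = elementary_submodel_props[OF G this]
  then have less: "model_less H G" using model_less_iff[of H G] G by fastforce
  have "class_count H < class_count F" "class_count F < class_count G"
    if "is_pdCG p \<tau> F" "model_less H F" "model_less F G" for F
    using class_count_less that H_props G by blast+
  then show "covered_by p \<tau> H G" unfolding covered_by_def using H_props less by fastforce
qed

subsection \<open>The quadruplet representation\<close>

lemma pd_EE_iff:
  assumes G: "is_pdCG p \<tau> G"
  shows "e \<in> pd_EE p \<tau> G \<longleftrightarrow>
    e \<in> pd_edges G \<and> e \<in> F_L p \<tau> \<and> tau_e \<tau> e \<in> pd_edges G \<and> {e} \<in> eclasses G"
proof -
  have "e \<in> tau_e \<tau> ` (pd_edges G \<inter> F_R p \<tau>) \<longleftrightarrow> tau_e \<tau> e \<in> pd_edges G"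
    if e: "e \<in> pd_edges G" "e \<in> F_L p \<tau>"
  proof
    assume "e \<in> tau_e \<tau> ` (pd_edges G \<inter> F_R p \<tau>)"
    then obtain g where "g \<in> pd_edges G" "e = tau_e \<tau> g" by blast
    then show "tau_e \<tau> e \<in> pd_edges G" using pdCG_tau_e_tau_e[OF G] by simp
  next
    assume "tau_e \<tau> e \<in> pd_edges G"
    moreover have "tau_e \<tau> e \<in> F_R p \<tau>" using tau_e_F_L e(2) .
    moreover have "tau_e \<tau> (tau_e \<tau> e) = e" using pdCG_tau_e_tau_e[OF G e(1)] .
    ultimately show "e \<in> tau_e \<tau> ` (pd_edges G \<inter> F_R p \<tau>)" by (metis IntI imageI)
  qed
  then show ?thesis unfolding pd_EE_def by blast
qed

lemma pd_EE_tau_e_notin: "is_pdCG p \<tau> G \<Longrightarrow> e \<in> pd_EE p \<tau> G \<Longrightarrow> tau_e \<tau> e \<notin> pd_EE p \<tau> G"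
  using pd_EE_iff tau_e_F_L F_L_F_R_disjoint by blast

lemma vertex_singleton_iff_LL:
  assumes G: "is_pdCG p \<tau> G" and i: "i \<in> {1..p}"
  shows "{i} \<in> vclasses G \<longleftrightarrow> i \<in> pd_LL q G \<or> \<tau> i \<in> pd_LL q G"
proof (cases "i \<le> q")
  case True
  then show ?thesis using i tau_L[of i] unfolding pd_LL_def by auto
next
  case False
  then have "\<tau> i \<in> {1..q}" using i tau_R by simp
  moreover have "{\<tau> i} \<in> vclasses G \<longleftrightarrow> {i} \<in> vclasses G"
    using vertex_singleton_tau[OF G, of i] vertex_singleton_tau[OF G, of "\<tau> i"] tau_tau[OF i] by auto
  ultimately show ?thesis using False unfolding pd_LL_def by auto
qed

lemma edge_singleton_iff_EE:
  assumes G: "is_pdCG p \<tau> G" and e: "e \<in> pd_edges G"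
  shows "{e} \<in> eclasses G \<longleftrightarrow>
    tau_e \<tau> e \<notin> pd_edges G \<or> tau_e \<tau> e = e \<or> e \<in> pd_EE p \<tau> G \<or> tau_e \<tau> e \<in> pd_EE p \<tau> G"
proof
  assume single: "{e} \<in> eclasses G"
  have "tau_e \<tau> e \<in> pd_EE p \<tau> G"
    if twin: "tau_e \<tau> e \<in> pd_edges G" "tau_e \<tau> e \<noteq> e" and "e \<notin> pd_EE p \<tau> G"
  proof -
    have "e \<notin> F_L p \<tau>" using that pd_EE_iff[OF G] e single by blast
    then have "tau_e \<tau> e \<in> F_L p \<tau>"
      using F_V_cases[of e] pdCG_edges[OF G] e twin(2) tau_e_F_R by blast
    then show ?thesis
      using pd_EE_iff[OF G] twin(1) edge_singleton_tau[OF G single twin(1)] pdCG_tau_e_tau_e[OF G e] e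
      by simp
  qed
  then show "tau_e \<tau> e \<notin> pd_edges G \<or> tau_e \<tau> e = e \<or> e \<in> pd_EE p \<tau> G \<or> tau_e \<tau> e \<in> pd_EE p \<tau> G"
    by blast
next
  have "{e} \<in> eclasses G" if "tau_e \<tau> e \<notin> pd_edges G \<or> tau_e \<tau> e = e"
    using edge_class_cases[OF G e] that unfolding pd_edges_def by auto
  moreover have "{e} \<in> eclasses G" if "tau_e \<tau> e \<in> pd_EE p \<tau> G"
    using that pd_EE_iff[OF G] edge_singleton_tau[OF G] pdCG_tau_e_tau_e[OF G e] by metis
  ultimately show "tau_e \<tau> e \<notin> pd_edges G \<or> tau_e \<tau> e = e \<or> e \<in> pd_EE p \<tau> G \<or>
      tau_e \<tau> e \<in> pd_EE p \<tau> G \<Longrightarrow> {e} \<in> eclasses G"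
    using pd_EE_iff[OF G] by blast
qed

lemma pd_quad_inj:
  assumes H: "is_pdCG p \<tau> H" and G: "is_pdCG p \<tau> G" and eq: "pd_quad p q \<tau> H = pd_quad p q \<tau> G"
  shows "H = G"
proof (rule cgraph_eqI)
  have E: "pd_edges H = pd_edges G" and LL: "pd_LL q H = pd_LL q G" and EE: "pd_EE p \<tau> H = pd_EE p \<tau> G"
    using eq unfolding pd_quad_def by simp_all
  show "vclasses H = vclasses G"
    using twin_partition_eqI[OF pdCG_vclasses[OF H] pdCG_vtwins[OF H] pdCG_vclasses[OF G]
        pdCG_vtwins[OF G] tau_tau] vertex_singleton_iff_LL[OF H] vertex_singleton_iff_LL[OF G] LL
    by blast
  show "eclasses H = eclasses G"
    using twin_partition_eqI[OF pdCG_eclasses[OF H] pdCG_etwins[OF H] pdCG_eclasses[OF G, folded E]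
        pdCG_etwins[OF G] pdCG_tau_e_tau_e[OF H]]
      edge_singleton_iff_EE[OF H] edge_singleton_iff_EE[OF G] E EE
    by blast
qed

lemma pd_quad_merge_vertices:
  assumes G: "is_pdCG p \<tau> G" and atoms: "{i} \<in> vclasses G" "{\<tau> i} \<in> vclasses G"
  shows "pd_quad p q \<tau> (merge_vertices \<tau> G i) = (pd_edges G, pd_LL q G - {i, \<tau> i}, pd_EE p \<tau> G)"
proof -
  have "pd_LL q (merge_vertices \<tau> G i) = pd_LL q G - {i, \<tau> i}"
    using singleton_in_twin_merge[where \<sigma>=\<tau> and x=i, OF pdCG_vclasses[OF G] atoms
        vertex_atom_tau_neq[OF G atoms(1)]]
    unfolding pd_LL_def merge_vertices_def by auto
  moreover have "pd_EE p \<tau> (merge_vertices \<tau> G i) = pd_EE p \<tau> G"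
    unfolding pd_EE_def by (simp add: merge_vertices_def pd_edges_def)
  ultimately show ?thesis unfolding pd_quad_def by simp
qed

lemma pd_quad_merge_edges:
  assumes G: "is_pdCG p \<tau> G" and atoms: "{e} \<in> eclasses G" "{tau_e \<tau> e} \<in> eclasses G"
    and ne: "e \<noteq> tau_e \<tau> e"
  shows "pd_quad p q \<tau> (merge_edges \<tau> G e) = (pd_edges G, pd_LL q G, pd_EE p \<tau> G - {e, tau_e \<tau> e})"
proof -
  note edges = pd_edges_merge_edges[OF G atoms ne]
  have "pd_EE p \<tau> (merge_edges \<tau> G e) = pd_EE p \<tau> G - {e, tau_e \<tau> e}"
    using singleton_in_twin_merge[where \<sigma>="tau_e \<tau>" and x=e, OF pdCG_eclasses[OF G] atoms ne]
    unfolding pd_EE_def edges by (auto simp: merge_edges_def)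
  moreover have "pd_LL q (merge_edges \<tau> G e) = pd_LL q G"
    unfolding pd_LL_def by (simp add: merge_edges_def)
  ultimately show ?thesis using edges unfolding pd_quad_def by simp
qed

lemma pd_quad_remove_class:
  assumes G: "is_pdCG p \<tau> G" and C: "C \<in> eclasses G"
  shows "pd_quad p q \<tau> (remove_class G C) =
    (pd_edges G - C, pd_LL q G, pd_EE p \<tau> G - (C \<union> tau_e \<tau> ` C))"
proof -
  note edges = pd_edges_remove_class[OF G C]
  have "tau_e \<tau> f \<in> C \<longleftrightarrow> f \<in> tau_e \<tau> ` C" if "f \<in> pd_edges G" for f
    using that C pdCG_tau_e_tau_e[OF G] unfolding pd_edges_def by (metis UnionI imageE imageI)
  moreover have "f \<in> pd_EE p \<tau> (remove_class G C) \<longleftrightarrow> f \<in> pd_EE p \<tau> G \<and> f \<notin> C \<and> tau_e \<tau> f \<notin> C" for f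
    unfolding pd_EE_iff[OF remove_class_submodel(1)[OF G C]] pd_EE_iff[OF G] edges
    by (auto simp: remove_class_def)
  ultimately have "pd_EE p \<tau> (remove_class G C) = pd_EE p \<tau> G - (C \<union> tau_e \<tau> ` C)"
    using pd_EE_iff[OF G] by blast
  moreover have "pd_LL q (remove_class G C) = pd_LL q G"
    unfolding pd_LL_def by (simp add: remove_class_def)
  ultimately show ?thesis using edges unfolding pd_quad_def by simp
qed

lemma pd_EE_Diff_tau_e:
  "is_pdCG p \<tau> G \<Longrightarrow> e \<in> pd_EE p \<tau> G \<Longrightarrow> pd_EE p \<tau> G - {e, tau_e \<tau> e} = pd_EE p \<tau> G - {e}"
  using pd_EE_tau_e_notin by blast

lemma pd_LL_Diff_tau:
  "j \<in> pd_LL q G \<Longrightarrow> pd_LL q G - {j, \<tau> j} = pd_LL q G - {j}"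
  using tau_L unfolding pd_LL_def by fastforce

lemma pd_LL_Diff_twins:
  assumes G: "is_pdCG p \<tau> G" and atoms: "{i} \<in> vclasses G" "{\<tau> i} \<in> vclasses G"
  shows "\<exists>j\<in>pd_LL q G. pd_LL q G - {i, \<tau> i} = pd_LL q G - {j}"
proof -
  have i: "i \<in> {1..p}" using partition_on_class_subset[OF pdCG_vclasses[OF G] atoms(1)] by simp
  show ?thesis
  proof (cases "i \<le> q")
    case True
    then have "i \<in> pd_LL q G" using atoms(1) i unfolding pd_LL_def by simp
    then show ?thesis using pd_LL_Diff_tau by blast
  next
    case False
    then have "\<tau> i \<in> pd_LL q G" "\<tau> (\<tau> i) = i" using i tau_R atoms(2) tau_tau unfolding pd_LL_def by auto
    then show ?thesis using pd_LL_Diff_tau[of "\<tau> i"] by (metis insert_commute)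
  qed
qed

lemma pd_EE_Diff_twins:
  assumes G: "is_pdCG p \<tau> G" and atoms: "{e} \<in> eclasses G" "{tau_e \<tau> e} \<in> eclasses G"
    and ne: "e \<noteq> tau_e \<tau> e"
  shows "\<exists>f\<in>pd_EE p \<tau> G. pd_EE p \<tau> G - {e, tau_e \<tau> e} = pd_EE p \<tau> G - {f}"
proof -
  have "e \<in> pd_edges G" "tau_e \<tau> e \<in> pd_edges G" using atoms unfolding pd_edges_def by auto
  then have e: "e \<in> pd_edges G" "tau_e \<tau> e \<in> pd_edges G" "tau_e \<tau> (tau_e \<tau> e) = e"
    using pdCG_tau_e_tau_e[OF G] by auto
  have "e \<in> F_V p" using e(1) pdCG_edges[OF G] by blast
  then consider "e \<in> F_L p \<tau>" | "tau_e \<tau> e \<in> F_L p \<tau>"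
    using F_V_cases[of e] ne tau_e_F_R[of e] by argo
  then show ?thesis
  proof cases
    case 1
    then have "e \<in> pd_EE p \<tau> G" using pd_EE_iff[OF G] e atoms by blast
    then show ?thesis using pd_EE_Diff_tau_e[OF G] by blast
  next
    case 2
    then have "tau_e \<tau> e \<in> pd_EE p \<tau> G" using pd_EE_iff[OF G] e atoms by simp
    then show ?thesis using pd_EE_Diff_tau_e[OF G, of "tau_e \<tau> e"] e(3) by (metis insert_commute)
  qed
qed

lemma pd_quad_merge_vertices_image:
  assumes G: "is_pdCG p \<tau> G"
  defines "LL \<equiv> pd_LL q G"
  shows "pd_quad p q \<tau> ` {merge_vertices \<tau> G i | i. {i} \<in> vclasses G \<and> {\<tau> i} \<in> vclasses G} =
    {(pd_edges G, LL - {i}, pd_EE p \<tau> G) | i. i \<in> LL}"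
    (is "?image = ?R")
proof
  show "?image \<subseteq> ?R"
  proof
    fix x assume "x \<in> ?image"
    then obtain i where i: "{i} \<in> vclasses G" "{\<tau> i} \<in> vclasses G" "x = pd_quad p q \<tau> (merge_vertices \<tau> G i)"
      by blast
    then obtain j where "j \<in> LL" "LL - {i, \<tau> i} = LL - {j}"
      using pd_LL_Diff_twins[OF G] unfolding LL_def by blast
    then show "x \<in> ?R" using i pd_quad_merge_vertices[OF G i(1,2)] unfolding LL_def by auto
  qed
  show "?R \<subseteq> ?image"
  proof
    fix x assume "x \<in> ?R"
    then obtain j where j: "j \<in> LL" "x = (pd_edges G, LL - {j}, pd_EE p \<tau> G)" by blast
    then have atoms: "{j} \<in> vclasses G" "{\<tau> j} \<in> vclasses G"
      using vertex_singleton_tau[OF G] unfolding LL_def pd_LL_def by auto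
    then have "x = pd_quad p q \<tau> (merge_vertices \<tau> G j)"
      using pd_quad_merge_vertices[OF G atoms] pd_LL_Diff_tau j unfolding LL_def by simp
    then show "x \<in> ?image" using atoms by blast
  qed
qed

lemma pd_quad_merge_edges_image:
  assumes G: "is_pdCG p \<tau> G"
  defines "EE \<equiv> pd_EE p \<tau> G"
  shows "pd_quad p q \<tau> ` {merge_edges \<tau> G e | e.
      {e} \<in> eclasses G \<and> {tau_e \<tau> e} \<in> eclasses G \<and> e \<noteq> tau_e \<tau> e} =
    {(pd_edges G, pd_LL q G, EE - {e}) | e. e \<in> EE}"
    (is "?image = ?R")
proof
  show "?image \<subseteq> ?R"
  proof
    fix x assume "x \<in> ?image"
    then obtain e where e: "{e} \<in> eclasses G" "{tau_e \<tau> e} \<in> eclasses G" "e \<noteq> tau_e \<tau> e"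
      "x = pd_quad p q \<tau> (merge_edges \<tau> G e)"
      by blast
    then obtain f where f: "f \<in> EE" "EE - {e, tau_e \<tau> e} = EE - {f}"
      using pd_EE_Diff_twins[OF G] unfolding EE_def by blast
    then have "x = (pd_edges G, pd_LL q G, EE - {f})"
      using e pd_quad_merge_edges[OF G e(1-3)] unfolding EE_def by simp
    then show "x \<in> ?R" using f(1) by blast
  qed
  show "?R \<subseteq> ?image"
  proof
    fix x assume "x \<in> ?R"
    then obtain e where e: "e \<in> EE" "x = (pd_edges G, pd_LL q G, EE - {e})" by blast
    then have atoms: "{e} \<in> eclasses G" "{tau_e \<tau> e} \<in> eclasses G" "e \<noteq> tau_e \<tau> e"
      using pd_EE_iff[OF G] edge_singleton_tau[OF G] tau_e_fixed_not_F_L unfolding EE_def by metis+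
    then have "x = pd_quad p q \<tau> (merge_edges \<tau> G e)"
      using pd_quad_merge_edges[OF G atoms] pd_EE_Diff_tau_e[OF G] e unfolding EE_def by simp
    then show "x \<in> ?image" using atoms by blast
  qed
qed

lemma edge_class_cases_EE:
  assumes G: "is_pdCG p \<tau> G" and C: "C \<in> eclasses G"
  obtains (atom_EE) e where "C = {e}" "e \<in> pd_EE p \<tau> G"
    | (atom_twin_EE) e where "C = {tau_e \<tau> e}" "e \<in> pd_EE p \<tau> G"
    | (atom_unpaired) e where "C = {e}" "e \<in> pd_edges G" "tau_e \<tau> e \<notin> pd_edges G"
    | (atom_self_twin) i where "C = {(i, \<tau> i)}" "i \<in> {1..p}" "(i, \<tau> i) \<in> pd_edges G"
    | (pair) e where "C = {e, tau_e \<tau> e}" "e \<in> pd_edges G" "tau_e \<tau> e \<in> pd_edges G"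
        "e \<noteq> tau_e \<tau> e" "e \<notin> pd_EE p \<tau> G" "tau_e \<tau> e \<notin> pd_EE p \<tau> G"
proof -
  consider e where "C = {e}" | e where "e \<noteq> tau_e \<tau> e" "C = {e, tau_e \<tau> e}"
    using pdCG_etwins[OF G] C unfolding twin_classes_def by blast
  then show ?thesis
  proof cases
    case (1 e)
    then have e: "e \<in> pd_edges G" "{e} \<in> eclasses G" using C unfolding pd_edges_def by auto
    then have eF: "e \<in> F_V p" using pdCG_edges[OF G] by blast
    consider "tau_e \<tau> e \<notin> pd_edges G" | "tau_e \<tau> e = e" | "e \<in> pd_EE p \<tau> G" | "tau_e \<tau> e \<in> pd_EE p \<tau> G"
      using edge_singleton_iff_EE[OF G e(1)] e(2) by blast
    then show ?thesis
    proof cases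
      case 2
      then have "e = (fst e, \<tau> (fst e))" "fst e \<in> {1..p}"
        using tau_e_fixed_iff[OF eF] eF unfolding F_V_def by auto
      then show ?thesis using atom_self_twin 1 e(1) by metis
    next
      case 4
      then show ?thesis using atom_twin_EE[of "tau_e \<tau> e"] 1 pdCG_tau_e_tau_e[OF G e(1)] by simp
    qed (use 1 e atom_EE atom_unpaired in blast)+
  next
    case (2 e)
    then have "e \<in> pd_edges G" "tau_e \<tau> e \<in> pd_edges G" using C unfolding pd_edges_def by auto
    moreover have "{e} \<notin> eclasses G" "{tau_e \<tau> e} \<notin> eclasses G"
      using partition_on_pair_not_singleton[OF pdCG_eclasses[OF G]] C 2 by blast+
    ultimately show ?thesis using pair 2 pd_EE_iff[OF G] by blast
  qed
qed

lemma edge_classes_by_EE: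
  assumes G: "is_pdCG p \<tau> G"
  shows "e \<in> pd_EE p \<tau> G \<Longrightarrow> {e} \<in> eclasses G"
    and "e \<in> pd_EE p \<tau> G \<Longrightarrow> {tau_e \<tau> e} \<in> eclasses G"
    and "e \<in> pd_edges G \<Longrightarrow> tau_e \<tau> e \<notin> pd_edges G \<Longrightarrow> {e} \<in> eclasses G"
    and "i \<in> {1..p} \<Longrightarrow> (i, \<tau> i) \<in> pd_edges G \<Longrightarrow> {(i, \<tau> i)} \<in> eclasses G"
    and "e \<in> pd_edges G \<Longrightarrow> tau_e \<tau> e \<in> pd_edges G \<Longrightarrow> e \<noteq> tau_e \<tau> e \<Longrightarrow>
      e \<notin> pd_EE p \<tau> G \<Longrightarrow> tau_e \<tau> e \<notin> pd_EE p \<tau> G \<Longrightarrow> {e, tau_e \<tau> e} \<in> eclasses G"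
proof -
  show "e \<in> pd_EE p \<tau> G \<Longrightarrow> {e} \<in> eclasses G" using pd_EE_iff[OF G] by blast
  then show "e \<in> pd_EE p \<tau> G \<Longrightarrow> {tau_e \<tau> e} \<in> eclasses G"
    using pd_EE_iff[OF G] edge_singleton_tau[OF G] by blast
  show "e \<in> pd_edges G \<Longrightarrow> tau_e \<tau> e \<notin> pd_edges G \<Longrightarrow> {e} \<in> eclasses G"
    using edge_singleton_iff_EE[OF G] by blast
  show "{(i, \<tau> i)} \<in> eclasses G" if "i \<in> {1..p}" "(i, \<tau> i) \<in> pd_edges G"
    using that edge_singleton_iff_EE[OF G] tau_e_fixed_iff pdCG_edges[OF G] by fastforce
  show "{e, tau_e \<tau> e} \<in> eclasses G" if "e \<in> pd_edges G" "tau_e \<tau> e \<in> pd_edges G"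
    "e \<noteq> tau_e \<tau> e" "e \<notin> pd_EE p \<tau> G" "tau_e \<tau> e \<notin> pd_EE p \<tau> G"
    using that edge_singleton_iff_EE[OF G] edge_class_cases[OF G] by metis
qed

lemma pd_quad_remove_atom:
  assumes G: "is_pdCG p \<tau> G" and e: "e \<in> pd_EE p \<tau> G"
  shows "pd_quad p q \<tau> (remove_class G {e}) = (pd_edges G - {e}, pd_LL q G, pd_EE p \<tau> G - {e})"
    and "pd_quad p q \<tau> (remove_class G {tau_e \<tau> e}) =
      (pd_edges G - {tau_e \<tau> e}, pd_LL q G, pd_EE p \<tau> G - {e})"
proof -
  have "tau_e \<tau> (tau_e \<tau> e) = e" using pdCG_tau_e_tau_e[OF G] pd_EE_iff[OF G] e by blast
  then show "pd_quad p q \<tau> (remove_class G {e}) = (pd_edges G - {e}, pd_LL q G, pd_EE p \<tau> G - {e})"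
    "pd_quad p q \<tau> (remove_class G {tau_e \<tau> e}) =
      (pd_edges G - {tau_e \<tau> e}, pd_LL q G, pd_EE p \<tau> G - {e})"
    using pd_quad_remove_class[OF G edge_classes_by_EE(1)[OF G e]]
      pd_quad_remove_class[OF G edge_classes_by_EE(2)[OF G e]] pd_EE_Diff_tau_e[OF G e]
    by (simp_all add: insert_commute)
qed

lemma pd_quad_remove_class_off_EE:
  assumes G: "is_pdCG p \<tau> G"
  defines "E \<equiv> pd_edges G" and "LL \<equiv> pd_LL q G" and "EE \<equiv> pd_EE p \<tau> G"
  shows "e \<in> E \<Longrightarrow> tau_e \<tau> e \<notin> E \<Longrightarrow> pd_quad p q \<tau> (remove_class G {e}) = (E - {e}, LL, EE)"
    and "i \<in> {1..p} \<Longrightarrow> (i, \<tau> i) \<in> E \<Longrightarrow>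
      pd_quad p q \<tau> (remove_class G {(i, \<tau> i)}) = (E - {(i, \<tau> i)}, LL, EE)"
    and "e \<in> E \<Longrightarrow> tau_e \<tau> e \<in> E \<Longrightarrow> e \<noteq> tau_e \<tau> e \<Longrightarrow> e \<notin> EE \<Longrightarrow> tau_e \<tau> e \<notin> EE \<Longrightarrow>
      pd_quad p q \<tau> (remove_class G {e, tau_e \<tau> e}) = (E - {e, tau_e \<tau> e}, LL, EE)"
proof -
  note quad = pd_quad_remove_class[OF G, folded E_def LL_def EE_def]
  note classes = edge_classes_by_EE[OF G, folded E_def EE_def]
  have EE_E: "EE \<subseteq> E" using pd_EE_iff[OF G] unfolding E_def EE_def by blast
  show "pd_quad p q \<tau> (remove_class G {e}) = (E - {e}, LL, EE)" if "e \<in> E" "tau_e \<tau> e \<notin> E"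
    using quad[OF classes(3)[OF that]] that EE_E pd_EE_iff[OF G] unfolding E_def EE_def by auto
  show "pd_quad p q \<tau> (remove_class G {(i, \<tau> i)}) = (E - {(i, \<tau> i)}, LL, EE)"
    if "i \<in> {1..p}" "(i, \<tau> i) \<in> E"
  proof -
    have "tau_e \<tau> (i, \<tau> i) = (i, \<tau> i)" using tau_e_fixed_iff that pdCG_edges[OF G] unfolding E_def by auto
    then show ?thesis
      using quad[OF classes(4)[OF that]] tau_e_fixed_not_F_L pd_EE_iff[OF G] unfolding EE_def by auto
  qed
  show "pd_quad p q \<tau> (remove_class G {e, tau_e \<tau> e}) = (E - {e, tau_e \<tau> e}, LL, EE)"
    if "e \<in> E" "tau_e \<tau> e \<in> E" "e \<noteq> tau_e \<tau> e" "e \<notin> EE" "tau_e \<tau> e \<notin> EE"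
  proof -
    have "tau_e \<tau> (tau_e \<tau> e) = e" using pdCG_tau_e_tau_e[OF G] that(1) unfolding E_def by blast
    then show ?thesis using quad[OF classes(5)[OF that]] that(4,5) by auto
  qed
qed

lemma pd_quad_remove_class_image:
  assumes G: "is_pdCG p \<tau> G"
  defines "E \<equiv> pd_edges G" and "LL \<equiv> pd_LL q G" and "EE \<equiv> pd_EE p \<tau> G"
  shows "pd_quad p q \<tau> ` remove_class G ` eclasses G =
      {(E - {e}, LL, EE - {e}) | e. e \<in> EE}
    \<union> {(E - {tau_e \<tau> e}, LL, EE - {e}) | e. e \<in> EE}
    \<union> {(E - {e}, LL, EE) | e. e \<in> E \<and> tau_e \<tau> e \<notin> E}
    \<union> {(E - {(i, \<tau> i)}, LL, EE) | i. i \<in> {1..p} \<and> (i, \<tau> i) \<in> E}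
    \<union> {(E - {e, tau_e \<tau> e}, LL, EE) | e. e \<in> E \<and> tau_e \<tau> e \<in> E \<and> e \<noteq> tau_e \<tau> e
                                          \<and> e \<notin> EE \<and> tau_e \<tau> e \<notin> EE}"
    (is "?image = ?R")
proof
  note atom = pd_quad_remove_atom[OF G, folded E_def LL_def EE_def]
  note off_EE = pd_quad_remove_class_off_EE[OF G, folded E_def LL_def EE_def]
  note classes = edge_classes_by_EE[OF G, folded E_def EE_def]
  show "?image \<subseteq> ?R"
  proof
    fix x assume "x \<in> ?image"
    then obtain C where C: "C \<in> eclasses G" "x = pd_quad p q \<tau> (remove_class G C)" by blast
    from G C(1) show "x \<in> ?R"
    proof (cases rule: edge_class_cases_EE)
      case (atom_EE e)
      then show ?thesis using C atom(1) unfolding EE_def by blast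
    next
      case (atom_twin_EE e)
      then show ?thesis using C atom(2) unfolding EE_def by blast
    next
      case (atom_unpaired e)
      then show ?thesis using C off_EE(1) unfolding E_def by blast
    next
      case (atom_self_twin i)
      then show ?thesis using C off_EE(2) unfolding E_def by blast
    next
      case (pair e)
      then show ?thesis using C off_EE(3) unfolding E_def EE_def by blast
    qed
  qed
  have realised: "pd_quad p q \<tau> (remove_class G C) \<in> ?image" if "C \<in> eclasses G" for C
    using that by blast
  show "?R \<subseteq> ?image"
  proof (intro Un_least)
    show "{(E - {e}, LL, EE - {e}) | e. e \<in> EE} \<subseteq> ?image"
      using realised[OF classes(1)] atom(1) by auto
    show "{(E - {tau_e \<tau> e}, LL, EE - {e}) | e. e \<in> EE} \<subseteq> ?image"
      using realised[OF classes(2)] atom(2) by auto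
    show "{(E - {e}, LL, EE) | e. e \<in> E \<and> tau_e \<tau> e \<notin> E} \<subseteq> ?image"
      using realised[OF classes(3)] off_EE(1) by auto
    show "{(E - {(i, \<tau> i)}, LL, EE) | i. i \<in> {1..p} \<and> (i, \<tau> i) \<in> E} \<subseteq> ?image"
      using realised[OF classes(4)] off_EE(2) by auto
    show "{(E - {e, tau_e \<tau> e}, LL, EE) | e. e \<in> E \<and> tau_e \<tau> e \<in> E \<and> e \<noteq> tau_e \<tau> e
        \<and> e \<notin> EE \<and> tau_e \<tau> e \<notin> EE} \<subseteq> ?image"
      using realised[OF classes(5)] off_EE(3) by auto
  qed
qed

end

theorem proposition8:
  fixes p q :: nat and \<tau> :: "nat \<Rightarrow> nat" and G :: cgraph
  assumes hsetup: "pd_setup p q \<tau>"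
    and G: "is_pdCG p \<tau> G"
  defines "E \<equiv> pd_edges G" and "LL \<equiv> pd_LL q G" and "EE \<equiv> pd_EE p \<tau> G"
  defines "Q \<equiv>
      {(E, LL - {i}, EE) | i. i \<in> LL}
    \<union> {(E, LL, EE - {e}) | e. e \<in> EE}
    \<union> {(E - {e}, LL, EE - {e}) | e. e \<in> EE}
    \<union> {(E - {tau_e \<tau> e}, LL, EE - {e}) | e. e \<in> EE}
    \<union> {(E - {e}, LL, EE) | e. e \<in> E \<and> tau_e \<tau> e \<notin> E}
    \<union> {(E - {(i, \<tau> i)}, LL, EE) | i. i \<in> {1..p} \<and> (i, \<tau> i) \<in> E}
    \<union> {(E - {e, tau_e \<tau> e}, LL, EE) | e. e \<in> E \<and> tau_e \<tau> e \<in> E \<and> e \<noteq> tau_e \<tau> e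
                                          \<and> e \<notin> EE \<and> tau_e \<tau> e \<notin> EE}"
  shows "{H. covered_by p \<tau> H G} = {H. is_pdCG p \<tau> H \<and> pd_quad p q \<tau> H \<in> Q}
         \<and> (\<forall>x\<in>Q. \<exists>H. is_pdCG p \<tau> H \<and> pd_quad p q \<tau> H = x)"
proof -
  interpret paired_data p q \<tau> using hsetup by (rule paired_data.intro)
  have Q: "Q = pd_quad p q \<tau> ` {H. elementary_submodel \<tau> H G}"
    unfolding elementary_submodels_eq image_Un pd_quad_merge_vertices_image[OF G]
      pd_quad_merge_edges_image[OF G] pd_quad_remove_class_image[OF G]
    by (simp add: Q_def E_def LL_def EE_def Un_assoc)
  have pdCG: "is_pdCG p \<tau> H" if "elementary_submodel \<tau> H G" for H
    using elementary_submodel_props[OF G that] by blast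
  have "{H. covered_by p \<tau> H G} = {H. is_pdCG p \<tau> H \<and> pd_quad p q \<tau> H \<in> Q}"
    unfolding covered_by_iff_elementary_submodel[OF G] Q using pdCG pd_quad_inj by blast
  moreover have "\<forall>x\<in>Q. \<exists>H. is_pdCG p \<tau> H \<and> pd_quad p q \<tau> H = x"
    unfolding Q using pdCG by blast
  ultimately show ?thesis ..
qed

end
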